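(* For $a,b\in F$ let $\mathrm{Ai}(a;b):=q^{-v(a)/3}\int_{t\in\mathcal{O}}\psi(at^3+bt)\,dt$. Let $a,b\in F$ with $v(a)<0$. Then: (1) if $v(b)<v(a)$, then $\mathrm{Ai}(a;b)=0$; (2) if $v(a)\le v(b)<\frac13v(a)$, then $|\mathrm{Ai}(a;b)|\le 2q^{2+v(3)}q^{-\frac1{12}v(a)+\frac14v(b)}$; (3) if $\frac13v(a)\le v(b)$, then $|\mathrm{Ai}(a;b)|\le q^{1+v(3)}$.
   Context: $F$ is a non-archimedean local field of characteristic $0$ and odd residue characteristic, $\mathcal{O}$ its ring of integers, $v$ the normalised valuation (with $v(0)=\infty$), $q$ the residue field cardinality, $\psi$ a fixed unramified additive character of $F$ (trivial on $\mathcal{O}$ but not on $\varpi^{-1}\mathcal{O}$), and $dt$ the Haar measure with $\mathrm{vol}(\mathcal{O})=1$. *)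

theory Defs
  imports Complex_Main
begin

text \<open>A field F (the type 'a) with a function v : F -> int, meant as the normalised
  discrete valuation on nonzero elements (v 0 is irrelevant; the paper's convention
  v 0 = infinity is handled explicitly in the statement).\<close>

definition intO :: "('a::field \<Rightarrow> int) \<Rightarrow> 'a set" where
  "intO v = {x. x = 0 \<or> 0 \<le> v x}"

definition cong_rel :: "('a::field \<Rightarrow> int) \<Rightarrow> nat \<Rightarrow> ('a \<times> 'a) set" where
  "cong_rel v N = {(x, y). x \<in> intO v \<and> y \<in> intO v \<and> (x = y \<or> int N \<le> v (x - y))}"

definition resq :: "('a::field \<Rightarrow> int) \<Rightarrow> nat" where
  "resq v = card (intO v // cong_rel v 1)"

definition normalised_discrete_valuation :: "('a::field \<Rightarrow> int) \<Rightarrow> bool" where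
  "normalised_discrete_valuation v \<longleftrightarrow>
     (\<forall>x y. x \<noteq> 0 \<longrightarrow> y \<noteq> 0 \<longrightarrow> v (x * y) = v x + v y) \<and>
     (\<forall>x y. x \<noteq> 0 \<longrightarrow> y \<noteq> 0 \<longrightarrow> x + y \<noteq> 0 \<longrightarrow> min (v x) (v y) \<le> v (x + y)) \<and>
     (\<exists>\<pi>. \<pi> \<noteq> 0 \<and> v \<pi> = 1)"

definition v_cauchy :: "('a::field \<Rightarrow> int) \<Rightarrow> (nat \<Rightarrow> 'a) \<Rightarrow> bool" where
  "v_cauchy v X \<longleftrightarrow> (\<forall>M::int. \<exists>N. \<forall>m\<ge>N. \<forall>n\<ge>N. X m = X n \<or> M \<le> v (X m - X n))"

definition v_converges_to :: "('a::field \<Rightarrow> int) \<Rightarrow> (nat \<Rightarrow> 'a) \<Rightarrow> 'a \<Rightarrow> bool" where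
  "v_converges_to v X L \<longleftrightarrow> (\<forall>M::int. \<exists>N. \<forall>n\<ge>N. X n = L \<or> M \<le> v (X n - L))"

text \<open>(F, v) is a non-archimedean local field of characteristic 0 with odd residue
  characteristic: complete w.r.t. a normalised discrete valuation, finite residue field
  of odd cardinality (q odd iff the residue characteristic is odd), characteristic 0.\<close>
definition nonarch_local_field_char0_odd :: "('a::field \<Rightarrow> int) \<Rightarrow> bool" where
  "nonarch_local_field_char0_odd v \<longleftrightarrow>
     normalised_discrete_valuation v \<and>
     (\<forall>n::nat. 0 < n \<longrightarrow> (of_nat n :: 'a) \<noteq> 0) \<and>
     (\<forall>X. v_cauchy v X \<longrightarrow> (\<exists>L. v_converges_to v X L)) \<and>
     finite (intO v // cong_rel v 1) \<and>
     odd (resq v)"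

definition unramified_character :: "('a::field \<Rightarrow> int) \<Rightarrow> ('a \<Rightarrow> complex) \<Rightarrow> bool" where
  "unramified_character v \<psi> \<longleftrightarrow>
     (\<forall>x y. \<psi> (x + y) = \<psi> x * \<psi> y) \<and>
     (\<forall>x. norm (\<psi> x) = 1) \<and>
     (\<forall>x\<in>intO v. \<psi> x = 1) \<and>
     (\<exists>x. x \<noteq> 0 \<and> v x = -1 \<and> \<psi> x \<noteq> 1)"

text \<open>Riemann sum over the cosets of varpi^N O in O, each of Haar volume 1/q^N.\<close>
definition riemann_O :: "('a::field \<Rightarrow> int) \<Rightarrow> ('a \<Rightarrow> complex) \<Rightarrow> nat \<Rightarrow> complex" where
  "riemann_O v f N =
     (\<Sum>C\<in>intO v // cong_rel v N. f (SOME x. x \<in> C)) / of_nat (card (intO v // cong_rel v N))"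

text \<open>Haar integral over O (vol O = 1) of a locally constant function: the limit of the
  Riemann sums, which are eventually constant for locally constant f.\<close>
definition haar_int_O :: "('a::field \<Rightarrow> int) \<Rightarrow> ('a \<Rightarrow> complex) \<Rightarrow> complex" where
  "haar_int_O v f = lim (\<lambda>N. riemann_O v f N)"

definition Airy :: "('a::field \<Rightarrow> int) \<Rightarrow> ('a \<Rightarrow> complex) \<Rightarrow> 'a \<Rightarrow> 'a \<Rightarrow> complex" where
  "Airy v \<psi> a b =
     complex_of_real (real (resq v) powr (- real_of_int (v a) / 3)) *
     haar_int_O v (\<lambda>t. \<psi> (a * t ^ 3 + b * t))"

end

theory Submission
  imports Defs "HOL-Library.Indicator_Function"
begin

text \<open>
  The integral \<open>I(a, b)\<close> of \<open>\<psi>(a t\<^sup>3 + b t)\<close> over \<open>\<O>\<close> equals the Riemann sum over the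
  classes modulo \<open>\<pi>\<^sup>N\<close> as soon as the integrand is constant on them. Splitting \<open>\<O>\<close> into the
  units and \<open>\<pi>\<O>\<close>, and substituting \<open>t = \<pi>u\<close> on the latter, gives the recursion
  \<open>I(a, b) = I\<^sub>\<times>(a, b) + I(a\<pi>\<^sup>3, b\<pi>) / q\<close>, where \<open>I\<^sub>\<times>\<close> is the integral over the units.

  On a class \<open>t\<^sub>0 + \<pi>\<^sup>k\<O>\<close> the phase is linear up to integral terms when the derivative
  \<open>D = 3at\<^sub>0\<^sup>2 + b\<close> is large; translating by \<open>x / D\<close> with \<open>v x = -1\<close> and \<open>\<psi> x \<noteq> 1\<close> then
  multiplies the integral over the class by \<open>\<psi> x\<close>, so it vanishes. Outside the critical
  regime \<open>v b = v a + v 3\<close> this kills \<open>I\<^sub>\<times>\<close>, and induction along the recursion reduces all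
  three claims to vanishing or to the trivial bound \<open>|I| \<le> 1\<close>. In the critical regime only
  classes with \<open>t\<^sub>0\<^sup>2 \<equiv> -b/(3a)\<close> modulo \<open>\<pi>\<^sup>L\<close> survive. As \<open>q\<close> is odd, \<open>2\<close> is a unit, so
  there are at most \<open>2 q^(k - L)\<close> of them at level \<open>k\<close>, each of measure \<open>q^(-k)\<close>; taking
  \<open>k = max \<lceil>-v b/2\<rceil> \<lceil>-v a/3\<rceil>\<close> and \<open>L = -v b - k\<close> gives \<open>|I\<^sub>\<times>| \<le> 2 q^(2 + v 3 + (v a + v b)/4)\<close>.
\<close>

lemma even_card_involution:
  assumes "finite A" "\<And>x. x \<in> A \<Longrightarrow> f x \<in> A" "\<And>x. x \<in> A \<Longrightarrow> f (f x) = x"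
    and "\<And>x. x \<in> A \<Longrightarrow> f x \<noteq> x"
  shows "even (card A)"
  using assms
proof (induction "card A" arbitrary: A rule: less_induct)
  case less
  show ?case
  proof (cases "A = {}")
    case False
    then obtain x where x: "x \<in> A"
      by blast
    define A' where "A' = A - {x, f x}"
    have "f x \<noteq> x"
      using less.prems(4) x by blast
    then have pair: "{x, f x} \<subseteq> A" "card {x, f x} = 2"
      using less.prems(2) x by auto
    then have card_A': "card A' = card A - 2" "2 \<le> card A"
      unfolding A'_def using less.prems(1) card_mono[OF less.prems(1) pair(1)]
      by (simp_all add: card_Diff_subset)
    have A'_closed: "f y \<in> A'" if "y \<in> A'" for y
    proof -
      have "y \<in> A" "y \<noteq> x" "y \<noteq> f x"
        using that by (auto simp: A'_def)
      then show ?thesis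
        unfolding A'_def using less.prems(2,3) x by (metis Diff_iff empty_iff insert_iff)
    qed
    have "even (card A')"
    proof (rule less.hyps)
      show "card A' < card A" "finite A'"
        using card_A' less.prems(1) by (simp_all add: A'_def)
    qed (use A'_closed less.prems(3,4) in \<open>auto simp: A'_def\<close>)
    then show ?thesis
      using card_A' by simp
  qed simp
qed

section \<open>Valuations\<close>

locale nonarch_local_field =
  fixes v :: "'a::field \<Rightarrow> int"
  assumes local_field: "nonarch_local_field_char0_odd v"
begin

text \<open>\<open>val_ge n x\<close> says \<open>x \<in> \<pi>\<^sup>n \<O>\<close>, with the convention \<open>v 0 = \<infinity>\<close>.\<close>
definition val_ge :: "int \<Rightarrow> 'a \<Rightarrow> bool" where
  "val_ge n x \<longleftrightarrow> x = 0 \<or> n \<le> v x"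

abbreviation q :: nat where "q \<equiv> resq v"

lemma v_mult: "x \<noteq> 0 \<Longrightarrow> y \<noteq> 0 \<Longrightarrow> v (x * y) = v x + v y"
  using local_field
  unfolding nonarch_local_field_char0_odd_def normalised_discrete_valuation_def by blast

lemma v_add_ge_min: "x \<noteq> 0 \<Longrightarrow> y \<noteq> 0 \<Longrightarrow> x + y \<noteq> 0 \<Longrightarrow> min (v x) (v y) \<le> v (x + y)"
  using local_field
  unfolding nonarch_local_field_char0_odd_def normalised_discrete_valuation_def by blast

lemma of_nat_neq_0: "0 < n \<Longrightarrow> (of_nat n :: 'a) \<noteq> 0"
  using local_field unfolding nonarch_local_field_char0_odd_def by blast

lemma odd_q: "odd q"
  using local_field unfolding nonarch_local_field_char0_odd_def by blast

lemma finite_residue_field: "finite (intO v // cong_rel v 1)"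
  using local_field unfolding nonarch_local_field_char0_odd_def by blast

definition uniformizer :: 'a where
  "uniformizer = (SOME p. p \<noteq> 0 \<and> v p = 1)"

lemma uniformizer: "uniformizer \<noteq> 0" "v uniformizer = 1"
proof -
  have "\<exists>p. p \<noteq> (0::'a) \<and> v p = 1"
    using local_field
    unfolding nonarch_local_field_char0_odd_def normalised_discrete_valuation_def by blast
  then show "uniformizer \<noteq> 0" "v uniformizer = 1"
    unfolding uniformizer_def by (metis (mono_tags, lifting) someI_ex)+
qed

lemma v_one [simp]: "v 1 = 0"
  using v_mult[of 1 1] by simp

lemma v_minus [simp]: "v (- x) = v x"
proof (cases "x = 0")
  case False
  have "v (-1) = 0"
    using v_mult[of "-1" "-1"] by simp
  then show ?thesis
    using v_mult[of "-1" x] False by simp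
qed simp

lemma v_inverse: "x \<noteq> 0 \<Longrightarrow> v (inverse x) = - v x"
  using v_mult[of x "inverse x"] by simp

lemma v_divide: "x \<noteq> 0 \<Longrightarrow> y \<noteq> 0 \<Longrightarrow> v (x / y) = v x - v y"
  by (simp add: divide_inverse v_mult v_inverse)

lemma v_power: "x \<noteq> 0 \<Longrightarrow> v (x ^ n) = int n * v x"
  by (induction n) (auto simp: v_mult algebra_simps)

lemma v_uniformizer_power: "v (uniformizer ^ k) = int k"
  using v_power uniformizer by simp

lemma v_mult_uniformizer_power:
  "x \<noteq> 0 \<Longrightarrow> x * uniformizer ^ k \<noteq> 0 \<and> v (x * uniformizer ^ k) = v x + int k"
  using uniformizer by (simp add: v_mult v_uniformizer_power)

lemma v_add_eq_left:
  assumes "x \<noteq> 0" "y \<noteq> 0" "v x < v y"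
  shows "x + y \<noteq> 0 \<and> v (x + y) = v x"
proof -
  have nz: "x + y \<noteq> 0"
    using assms by (metis add_eq_0_iff less_irrefl v_minus)
  have "min (v (x + y)) (v (- y)) \<le> v x"
    using v_add_ge_min[of "x + y" "- y"] nz assms by simp
  then show ?thesis
    using v_add_ge_min[of x y] nz assms by (simp add: min_def split: if_splits)
qed

lemma val_ge_0 [simp]: "val_ge n 0"
  by (simp add: val_ge_def)

lemma val_ge_self: "val_ge (v x) x"
  by (simp add: val_ge_def)

lemma val_ge_mono: "val_ge n x \<Longrightarrow> m \<le> n \<Longrightarrow> val_ge m x"
  unfolding val_ge_def by auto

lemma val_ge_add: "val_ge n x \<Longrightarrow> val_ge n y \<Longrightarrow> val_ge n (x + y)"
  unfolding val_ge_def using v_add_ge_min[of x y]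
  by (cases "x = 0"; cases "y = 0"; cases "x + y = 0") auto

lemma val_ge_minus [simp]: "val_ge n (- x) \<longleftrightarrow> val_ge n x"
  by (simp add: val_ge_def)

lemma val_ge_diff: "val_ge n x \<Longrightarrow> val_ge n y \<Longrightarrow> val_ge n (x - y)"
  using val_ge_add[of n x "- y"] by simp

lemma val_ge_diff_commute: "val_ge n (x - y) \<longleftrightarrow> val_ge n (y - x)"
  using val_ge_minus[of n "x - y"] by simp

lemma val_ge_mult: "val_ge n x \<Longrightarrow> val_ge m y \<Longrightarrow> val_ge (n + m) (x * y)"
  unfolding val_ge_def by (cases "x = 0"; cases "y = 0") (auto simp: v_mult)

lemma val_ge_power: "val_ge n x \<Longrightarrow> val_ge (int k * n) (x ^ k)"
proof (induction k)
  case (Suc k)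
  then have "val_ge (n + int k * n) (x * x ^ k)"
    using val_ge_mult by blast
  then show ?case
    by (simp add: algebra_simps)
qed (simp add: val_ge_def)

lemma val_ge_of_nat: "val_ge 0 (of_nat n)"
proof (induction n)
  case (Suc n)
  have "val_ge 0 (of_nat n + 1)"
    by (rule val_ge_add[OF Suc]) (simp add: val_ge_def)
  then show ?case
    by (simp add: add.commute)
qed simp

lemma three_neq_0: "(3::'a) \<noteq> 0"
  using of_nat_neq_0[of 3] by simp

lemma v_three_nonneg: "0 \<le> v (3::'a)"
  using val_ge_of_nat[of 3] three_neq_0 by (simp add: val_ge_def)

lemma val_ge_divide_unit: "val_ge n z \<Longrightarrow> w \<noteq> 0 \<Longrightarrow> v w = 0 \<Longrightarrow> val_ge n (z / w)"
  unfolding val_ge_def by (cases "z = 0") (auto simp: v_divide)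

lemma mem_intO_iff: "x \<in> intO v \<longleftrightarrow> val_ge 0 x"
  unfolding intO_def val_ge_def by auto

section \<open>Residue classes modulo powers of the uniformizer\<close>

definition coset :: "nat \<Rightarrow> 'a \<Rightarrow> 'a set" where
  "coset N x = cong_rel v N `` {x}"

definition residues :: "nat \<Rightarrow> 'a set set" where
  "residues N = intO v // cong_rel v N"

text \<open>The representatives chosen by \<^const>\<open>riemann_O\<close>.\<close>
definition rep :: "'a set \<Rightarrow> 'a" where
  "rep C = (SOME x. x \<in> C)"

lemma cong_rel_iff:
  "(x, y) \<in> cong_rel v N \<longleftrightarrow> x \<in> intO v \<and> y \<in> intO v \<and> val_ge (int N) (x - y)"
  unfolding cong_rel_def val_ge_def by auto

lemma equiv_cong_rel: "equiv (intO v) (cong_rel v N)"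
proof (rule equivI)
  show "cong_rel v N \<subseteq> intO v \<times> intO v" "refl_on (intO v) (cong_rel v N)"
    by (auto simp: refl_on_def cong_rel_iff)
  show "sym (cong_rel v N)"
    unfolding sym_on_def using cong_rel_iff val_ge_diff_commute by blast
  show "trans (cong_rel v N)"
  proof (rule transI)
    fix x y z
    assume "(x, y) \<in> cong_rel v N" "(y, z) \<in> cong_rel v N"
    then show "(x, z) \<in> cong_rel v N"
      using val_ge_add[of "int N" "x - y" "y - z"] by (simp add: cong_rel_iff)
  qed
qed

lemma mem_coset_iff: "x \<in> intO v \<Longrightarrow> y \<in> coset N x \<longleftrightarrow> y \<in> intO v \<and> val_ge (int N) (y - x)"
  unfolding coset_def by (auto simp: cong_rel_iff val_ge_diff_commute)

lemma coset_self: "x \<in> intO v \<Longrightarrow> x \<in> coset N x"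
  by (simp add: mem_coset_iff)

lemma coset_subset_intO: "coset N x \<subseteq> intO v"
  unfolding coset_def using cong_rel_iff by blast

lemma coset_in_residues: "x \<in> intO v \<Longrightarrow> coset N x \<in> residues N"
  unfolding coset_def residues_def by (rule quotientI)

lemma residuesE:
  assumes "C \<in> residues N"
  obtains x where "x \<in> intO v" "C = coset N x"
  using assms unfolding coset_def residues_def by (auto elim: quotientE)

lemma coset_eq_iff:
  "x \<in> intO v \<Longrightarrow> y \<in> intO v \<Longrightarrow> coset N x = coset N y \<longleftrightarrow> val_ge (int N) (x - y)"
  unfolding coset_def using equiv_class_eq_iff[OF equiv_cong_rel, of x y N] cong_rel_iff by blast

lemma coset_eq_of_mem: "y \<in> coset N x \<Longrightarrow> x \<in> intO v \<Longrightarrow> coset N y = coset N x"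
  by (simp add: coset_eq_iff mem_coset_iff)

lemma residue_rep:
  assumes "C \<in> residues N"
  shows "rep C \<in> C" "coset N (rep C) = C"
proof -
  obtain x where x: "x \<in> intO v" "C = coset N x"
    using assms by (rule residuesE)
  then show "rep C \<in> C"
    unfolding rep_def using coset_self by (metis someI)
  then show "coset N (rep C) = C"
    using coset_eq_of_mem x by simp
qed

lemma residue_subset_intO: "C \<in> residues N \<Longrightarrow> C \<subseteq> intO v"
  using coset_subset_intO by (metis residuesE)

lemma rep_in_intO: "C \<in> residues N \<Longrightarrow> rep C \<in> intO v"
  using residue_rep residue_subset_intO by blast

lemma mem_residue_iff: "C \<in> residues N \<Longrightarrow> x \<in> intO v \<Longrightarrow> x \<in> C \<longleftrightarrow> coset N x = C"
  using coset_eq_of_mem coset_self residue_rep rep_in_intO by metis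

lemma rep_coset: "x \<in> intO v \<Longrightarrow> rep (coset N x) \<in> intO v \<and> val_ge (int N) (rep (coset N x) - x)"
  using residue_rep(1)[OF coset_in_residues] mem_coset_iff by blast

lemma coset_mono: "k \<le> N \<Longrightarrow> x \<in> intO v \<Longrightarrow> coset N x \<subseteq> coset k x"
  using val_ge_mono[of "int N" _ "int k"] by (auto simp: mem_coset_iff)

lemma coset_0: "x \<in> intO v \<Longrightarrow> coset 0 x = intO v"
  by (auto simp: mem_coset_iff mem_intO_iff val_ge_diff)

lemma residues_0: "residues 0 = {intO v}"
proof -
  have "(0::'a) \<in> intO v"
    by (simp add: mem_intO_iff)
  then have "intO v \<in> residues 0"
    using coset_0 coset_in_residues by metis
  moreover have "C = intO v" if "C \<in> residues 0" for C
    using that coset_0 by (metis residuesE)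
  ultimately show ?thesis
    by blast
qed

lemma residue_subset_iff:
  assumes "C \<in> residues k" "C' \<in> residues N" "k \<le> N"
  shows "C' \<subseteq> C \<longleftrightarrow> rep C' \<in> C"
proof
  assume "rep C' \<in> C"
  then have "coset k (rep C') = C"
    using assms(1) rep_in_intO[OF assms(2)] mem_residue_iff by blast
  then show "C' \<subseteq> C"
    using coset_mono[OF assms(3) rep_in_intO[OF assms(2)]] residue_rep(2)[OF assms(2)] by simp
qed (use residue_rep(1)[OF assms(2)] in blast)

lemma sum_residues_split:
  assumes "finite (residues N)" "finite (residues k)" "k \<le> N"
  shows "(\<Sum>C\<in>residues N. g C) = (\<Sum>D\<in>residues k. \<Sum>C\<in>{C \<in> residues N. C \<subseteq> D}. g C)"
proof -
  have "(\<Sum>C\<in>residues N. g C) = (\<Sum>D\<in>residues k. \<Sum>C\<in>{C \<in> residues N. coset k (rep C) = D}. g C)"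
    using assms coset_in_residues rep_in_intO by (intro sum.group[symmetric]) auto
  also have "\<dots> = (\<Sum>D\<in>residues k. \<Sum>C\<in>{C \<in> residues N. C \<subseteq> D}. g C)"
  proof (intro sum.cong refl arg_cong[where f = "sum g"] Collect_cong conj_cong)
    fix D C
    assume "D \<in> residues k" "C \<in> residues N"
    then show "coset k (rep C) = D \<longleftrightarrow> C \<subseteq> D"
      using assms(3) residue_subset_iff mem_residue_iff rep_in_intO by metis
  qed
  finally show ?thesis .
qed

lemma val_ge_uniformizer_mult_iff: "val_ge (n + int k) (uniformizer ^ k * y) \<longleftrightarrow> val_ge n y"
  unfolding val_ge_def using uniformizer by (cases "y = 0") (auto simp: v_mult v_uniformizer_power)

lemma affine_mem_coset:
  assumes "x \<in> intO v" "y \<in> intO v"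
  shows "x + uniformizer ^ k * y \<in> coset k x"
proof -
  have "val_ge (int k) (uniformizer ^ k * y)"
    using assms(2) val_ge_uniformizer_mult_iff[of 0 k y] by (simp add: mem_intO_iff)
  then show ?thesis
    using assms(1) val_ge_add[of 0 x] val_ge_mono[of "int k" _ 0]
    by (simp add: mem_coset_iff mem_intO_iff)
qed

lemma affine_inverse_mem_intO:
  assumes "x \<in> intO v" "z \<in> coset k x"
  shows "(z - x) / uniformizer ^ k \<in> intO v"
proof -
  have "uniformizer ^ k * ((z - x) / uniformizer ^ k) = z - x"
    using uniformizer by simp
  then show ?thesis
    using assms val_ge_uniformizer_mult_iff[of 0 k "(z - x) / uniformizer ^ k"]
    by (simp add: mem_coset_iff mem_intO_iff)
qed

lemma coset_affine_subset:
  assumes "x \<in> intO v" "y \<in> intO v" "k \<le> N"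
  shows "coset N (x + uniformizer ^ k * y) \<subseteq> coset k x"
  using coset_mono[OF assms(3)] coset_eq_of_mem[OF affine_mem_coset assms(1)] assms(1,2)
    coset_subset_intO affine_mem_coset by blast

lemma coset_affine_eq_iff:
  assumes "x \<in> intO v" "y \<in> intO v" "y' \<in> intO v" "k \<le> N"
  shows "coset N (x + uniformizer ^ k * y) = coset N (x + uniformizer ^ k * y')
    \<longleftrightarrow> coset (N - k) y = coset (N - k) y'"
proof -
  have "x + uniformizer ^ k * y \<in> intO v" "x + uniformizer ^ k * y' \<in> intO v"
    using affine_mem_coset assms(1-3) coset_subset_intO by blast+
  moreover have "(x + uniformizer ^ k * y) - (x + uniformizer ^ k * y') = uniformizer ^ k * (y - y')"
    by (simp add: algebra_simps)
  ultimately show ?thesis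
    using assms val_ge_uniformizer_mult_iff[of "int (N - k)" k "y - y'"]
    by (simp add: coset_eq_iff of_nat_diff)
qed

lemma bij_betw_residues_in_coset:
  assumes x: "x \<in> intO v" and kN: "k \<le> N"
  shows "bij_betw (\<lambda>D. coset N (x + uniformizer ^ k * rep D))
           (residues (N - k)) {C \<in> residues N. C \<subseteq> coset k x}"
proof -
  define shift where "shift y = x + uniformizer ^ k * y" for y
  define unshift where "unshift z = (z - x) / uniformizer ^ k" for z
  have shift_unshift: "shift (unshift z) = z" for z
    using uniformizer by (simp add: shift_def unshift_def)
  have unshift: "unshift z \<in> intO v" if "z \<in> coset k x" for z
    using affine_inverse_mem_intO[OF x that] by (simp add: unshift_def)
  have shift_intO: "shift y \<in> intO v" if "y \<in> intO v" for y
    using affine_mem_coset[OF x that] coset_subset_intO by (auto simp: shift_def)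
  note shift = coset_affine_subset[OF x _ kN, folded shift_def]
    coset_affine_eq_iff[OF x _ _ kN, folded shift_def]
  show ?thesis
    unfolding shift_def[symmetric]
  proof (rule bij_betw_byWitness[where f' = "\<lambda>C. coset (N - k) (unshift (rep C))"])
    show "\<forall>D\<in>residues (N - k). coset (N - k) (unshift (rep (coset N (shift (rep D))))) = D"
    proof
      fix D
      assume D: "D \<in> residues (N - k)"
      define z where "z = rep (coset N (shift (rep D)))"
      have "z \<in> coset N (shift (rep D))"
        using residue_rep(1)[OF coset_in_residues] shift_intO rep_in_intO[OF D] z_def by blast
      then have "z \<in> coset k x" "coset N (shift (unshift z)) = coset N (shift (rep D))"
        using shift(1)[OF rep_in_intO[OF D]] coset_eq_of_mem shift_intO rep_in_intO[OF D]
        by (auto simp: shift_unshift)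
      then show "coset (N - k) (unshift z) = D"
        using shift(2) unshift rep_in_intO[OF D] residue_rep(2)[OF D] by metis
    qed
    show "\<forall>C\<in>{C \<in> residues N. C \<subseteq> coset k x}.
        coset N (shift (rep (coset (N - k) (unshift (rep C))))) = C"
    proof
      fix C
      assume C: "C \<in> {C \<in> residues N. C \<subseteq> coset k x}"
      define y where "y = unshift (rep C)"
      have y: "y \<in> intO v"
        using C residue_rep(1) unshift y_def by blast
      then have "coset N (shift (rep (coset (N - k) y))) = coset N (shift y)"
        using shift(2) rep_coset[OF y] residue_rep(2)[OF coset_in_residues[OF y]] by metis
      then show "coset N (shift (rep (coset (N - k) y))) = C"
        using C residue_rep(2) shift_unshift y_def by simp
    qed
    show "(\<lambda>D. coset N (shift (rep D))) ` residues (N - k) \<subseteq> {C \<in> residues N. C \<subseteq> coset k x}"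
      using coset_in_residues shift_intO shift(1) rep_in_intO by blast
    show "(\<lambda>C. coset (N - k) (unshift (rep C))) ` {C \<in> residues N. C \<subseteq> coset k x} \<subseteq> residues (N - k)"
      using coset_in_residues unshift residue_rep(1) by blast
  qed
qed

lemma residues_finite_card: "finite (residues N) \<and> card (residues N) = q ^ N"
proof (induction N)
  case 0
  then show ?case
    using residues_0 by simp
next
  case (Suc N)
  have fibre: "finite {C \<in> residues (Suc N). C \<subseteq> D} \<and> card {C \<in> residues (Suc N). C \<subseteq> D} = q"
    if "D \<in> residues N" for D
  proof -
    obtain x where "x \<in> intO v" "D = coset N x"
      using \<open>D \<in> residues N\<close> by (rule residuesE)
    then show ?thesis
      using bij_betw_residues_in_coset[of x N "Suc N"] finite_residue_field
      by (simp add: bij_betw_finite bij_betw_same_card resq_def residues_def)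
  qed
  have "C \<in> (\<Union>D\<in>residues N. {C \<in> residues (Suc N). C \<subseteq> D})" if "C \<in> residues (Suc N)" for C
  proof -
    have "C \<subseteq> coset N (rep C)"
      using coset_mono[of N "Suc N", OF _ rep_in_intO[OF that]] residue_rep(2)[OF that] by simp
    then show ?thesis
      using that coset_in_residues[OF rep_in_intO[OF that]] by blast
  qed
  then have "residues (Suc N) \<subseteq> (\<Union>D\<in>residues N. {C \<in> residues (Suc N). C \<subseteq> D})"
    by blast
  then have fin: "finite (residues (Suc N))"
    using Suc.IH fibre by (meson finite_UN_I finite_subset)
  have "card (residues (Suc N)) = (\<Sum>D\<in>residues N. card {C \<in> residues (Suc N). C \<subseteq> D})"
    using sum_residues_split[of "Suc N" N "\<lambda>C. 1::nat"] fin Suc.IH by simp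
  also have "\<dots> = q ^ Suc N"
    using fibre Suc.IH by simp
  finally show ?case
    using fin by simp
qed

lemma finite_residues: "finite (residues N)"
  and card_residues: "card (residues N) = q ^ N"
  using residues_finite_card by blast+

lemma q_pos: "0 < q"
  using card_residues[of 1] finite_residues[of 1] coset_in_residues[of 0 1]
  by (metis card_gt_0_iff empty_iff mem_intO_iff power_one_right val_ge_0)

lemma card_residues_in_residue:
  assumes "D \<in> residues k" "k \<le> N"
  shows "card {C \<in> residues N. C \<subseteq> D} = q ^ (N - k)"
proof -
  obtain x where "x \<in> intO v" "D = coset k x"
    using assms(1) by (rule residuesE)
  then show ?thesis
    using bij_betw_same_card[OF bij_betw_residues_in_coset] assms(2) card_residues by simp
qed

section \<open>Riemann sums of locally constant functions\<close>

definition locally_const :: "nat \<Rightarrow> ('a \<Rightarrow> 'b) \<Rightarrow> bool" where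
  "locally_const N g \<longleftrightarrow> (\<forall>x\<in>intO v. \<forall>y\<in>intO v. val_ge (int N) (x - y) \<longrightarrow> g x = g y)"

lemma locally_constD:
  "locally_const N g \<Longrightarrow> x \<in> intO v \<Longrightarrow> y \<in> intO v \<Longrightarrow> val_ge (int N) (x - y) \<Longrightarrow> g x = g y"
  unfolding locally_const_def by blast

lemma locally_const_rep:
  assumes g: "locally_const N g" and D: "D \<in> residues N" and x: "x \<in> D"
  shows "g x = g (rep D)"
proof -
  have "x \<in> intO v"
    using x residue_subset_intO[OF D] by blast
  moreover have "coset N x = coset N (rep D)"
    using mem_residue_iff[OF D] x residue_rep(2)[OF D] \<open>x \<in> intO v\<close> by simp
  ultimately show ?thesis
    using locally_constD[OF g] coset_eq_iff rep_in_intO[OF D] by blast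
qed

lemma locally_const_mult: "locally_const N g \<Longrightarrow> locally_const N h \<Longrightarrow> locally_const N (\<lambda>x. g x * h x)"
  unfolding locally_const_def by metis

lemma locally_const_indicator_coset:
  assumes "t \<in> intO v" "k \<le> N"
  shows "locally_const N (indicator (coset k t) :: 'a \<Rightarrow> complex)"
  unfolding locally_const_def
proof (intro ballI impI)
  fix x y
  assume x: "x \<in> intO v" and y: "y \<in> intO v" and "val_ge (int N) (x - y)"
  then have "val_ge (int k) (x - y)"
    using assms(2) val_ge_mono by simp
  moreover have "x - t = (y - t) + (x - y)" "y - t = (x - t) - (x - y)"
    by simp_all
  ultimately have "val_ge (int k) (x - t) \<longleftrightarrow> val_ge (int k) (y - t)"
    using val_ge_add val_ge_diff by metis
  then have "x \<in> coset k t \<longleftrightarrow> y \<in> coset k t"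
    using x y assms(1) by (simp add: mem_coset_iff)
  then show "indicator (coset k t) x = (indicator (coset k t) y :: complex)"
    by (simp add: indicator_def)
qed

lemma locally_const_indicator_residue:
  "C \<in> residues k \<Longrightarrow> k \<le> N \<Longrightarrow> locally_const N (indicator C :: 'a \<Rightarrow> complex)"
  using locally_const_indicator_coset by (metis residuesE)

definition units_O :: "'a set" where
  "units_O = {x \<in> intO v. \<not> val_ge 1 x}"

lemma units_O_eq: "units_O = intO v - coset 1 0"
  by (auto simp: units_O_def mem_coset_iff mem_intO_iff)

lemma locally_const_indicator_units:
  assumes "1 \<le> N"
  shows "locally_const N (indicator units_O :: 'a \<Rightarrow> complex)"
  unfolding locally_const_def
proof (intro ballI impI)
  fix x y
  assume x: "x \<in> intO v" and y: "y \<in> intO v" and "val_ge (int N) (x - y)"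
  moreover have "locally_const N (indicator (coset 1 0) :: 'a \<Rightarrow> complex)"
    using locally_const_indicator_coset[of 0 1 N] assms by (simp add: mem_intO_iff)
  ultimately have "indicator (coset 1 0) x = (indicator (coset 1 0) y :: complex)"
    using locally_constD by blast
  then show "indicator units_O x = (indicator units_O y :: complex)"
    using x y by (auto simp: units_O_eq indicator_def)
qed

lemma uniformizer_mult_mem_coset: "x \<in> intO v \<Longrightarrow> uniformizer * x \<in> coset 1 0"
  using val_ge_uniformizer_mult_iff[of 0 1 x] val_ge_mono[of 1 _ 0]
  by (simp add: mem_coset_iff mem_intO_iff)

lemma locally_const_scale: "locally_const (Suc N) G \<Longrightarrow> locally_const N (\<lambda>u. G (uniformizer * u))"
  unfolding locally_const_def
proof (intro ballI impI)
  fix x y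
  assume G: "\<forall>x\<in>intO v. \<forall>y\<in>intO v. val_ge (int (Suc N)) (x - y) \<longrightarrow> G x = G y"
    and x: "x \<in> intO v" and y: "y \<in> intO v" and "val_ge (int N) (x - y)"
  then have "val_ge (int (Suc N)) (uniformizer * x - uniformizer * y)"
    using val_ge_uniformizer_mult_iff[of "int N" 1 "x - y"] by (simp add: algebra_simps)
  then show "G (uniformizer * x) = G (uniformizer * y)"
    using G uniformizer_mult_mem_coset x y coset_subset_intO by blast
qed

lemma riemann_O_eq: "riemann_O v g N = (\<Sum>C\<in>residues N. g (rep C)) / of_nat (q ^ N)"
  using card_residues unfolding riemann_O_def residues_def rep_def by simp

lemma riemann_O_level:
  assumes g: "locally_const N g" and NM: "N \<le> M"
  shows "riemann_O v g M = riemann_O v g N"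
proof -
  have "(\<Sum>C\<in>residues M. g (rep C)) = (\<Sum>D\<in>residues N. \<Sum>C\<in>{C \<in> residues M. C \<subseteq> D}. g (rep C))"
    using sum_residues_split[OF finite_residues finite_residues NM] .
  also have "\<dots> = (\<Sum>D\<in>residues N. \<Sum>C\<in>{C \<in> residues M. C \<subseteq> D}. g (rep D))"
    using locally_const_rep[OF g] residue_rep(1) by (intro sum.cong refl) blast
  also have "\<dots> = of_nat (q ^ (M - N)) * (\<Sum>D\<in>residues N. g (rep D))"
    using card_residues_in_residue[OF _ NM] by (simp add: sum_distrib_left)
  finally have "(\<Sum>C\<in>residues M. g (rep C)) = of_nat (q ^ (M - N)) * (\<Sum>D\<in>residues N. g (rep D))" .
  moreover have "q ^ M = q ^ (M - N) * q ^ N"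
    using NM by (simp add: power_add[symmetric])
  ultimately show ?thesis
    using q_pos by (simp add: riemann_O_eq)
qed

lemma haar_int_O_eq_riemann_O: "locally_const N g \<Longrightarrow> haar_int_O v g = riemann_O v g N"
  unfolding haar_int_O_def
  by (rule limI, rule tendsto_eventually) (auto simp: eventually_sequentially intro: riemann_O_level)

lemma riemann_O_cong:
  assumes "\<And>x. x \<in> intO v \<Longrightarrow> g x = h x"
  shows "riemann_O v g N = riemann_O v h N"
  unfolding riemann_O_eq by (simp add: assms rep_in_intO cong: sum.cong)

lemma riemann_O_add: "riemann_O v (\<lambda>x. g x + h x) N = riemann_O v g N + riemann_O v h N"
  unfolding riemann_O_eq by (simp add: sum.distrib add_divide_distrib)

lemma riemann_O_mult_left: "riemann_O v (\<lambda>x. c * g x) N = c * riemann_O v g N"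
  unfolding riemann_O_eq by (simp add: sum_distrib_left)

lemma riemann_O_sum: "finite S \<Longrightarrow> riemann_O v (\<lambda>x. \<Sum>i\<in>S. g i x) N = (\<Sum>i\<in>S. riemann_O v (g i) N)"
  unfolding riemann_O_eq by (simp add: sum.swap[of _ S] sum_divide_distrib)

lemma riemann_O_translate:
  assumes g: "locally_const N g" and s: "s \<in> intO v"
  shows "riemann_O v (\<lambda>x. g (x + s)) N = riemann_O v g N"
proof -
  have plus: "x + s \<in> intO v" and minus: "x - s \<in> intO v" if "x \<in> intO v" for x
    using that s val_ge_add val_ge_diff by (auto simp: mem_intO_iff)
  have "(\<Sum>C\<in>residues N. g (rep C + s)) = (\<Sum>C\<in>residues N. g (rep (coset N (rep C + s))))"
    using locally_const_rep[OF g coset_in_residues] coset_self plus rep_in_intO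
    by (intro sum.cong refl) blast
  also have "\<dots> = (\<Sum>C\<in>residues N. g (rep C))"
  proof (rule sum.reindex_bij_witness[where i = "\<lambda>C. coset N (rep C - s)" and j = "\<lambda>C. coset N (rep C + s)"])
    fix C
    assume C: "C \<in> residues N"
    show "coset N (rep C + s) \<in> residues N" "coset N (rep C - s) \<in> residues N"
      using coset_in_residues plus minus rep_in_intO[OF C] by auto
    have r: "rep (coset N (rep C + s)) \<in> intO v"
      "val_ge (int N) ((rep (coset N (rep C + s)) - s) - rep C)"
      using rep_coset[OF plus[OF rep_in_intO[OF C]]] by (simp_all add: algebra_simps)
    then have "coset N (rep (coset N (rep C + s)) - s) = coset N (rep C)"
      using coset_eq_iff[OF minus[OF r(1)] rep_in_intO[OF C]] by simp
    then show "coset N (rep (coset N (rep C + s)) - s) = C"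
      using residue_rep(2)[OF C] by simp
    have r': "rep (coset N (rep C - s)) \<in> intO v"
      "val_ge (int N) ((rep (coset N (rep C - s)) + s) - rep C)"
      using rep_coset[OF minus[OF rep_in_intO[OF C]]] by (simp_all add: algebra_simps)
    then have "coset N (rep (coset N (rep C - s)) + s) = coset N (rep C)"
      using coset_eq_iff[OF plus[OF r'(1)] rep_in_intO[OF C]] by simp
    then show "coset N (rep (coset N (rep C - s)) + s) = C"
      using residue_rep(2)[OF C] by simp
  qed simp
  finally show ?thesis
    unfolding riemann_O_eq by simp
qed

lemma riemann_O_eq_0_if_translate_mult:
  assumes g: "locally_const N g" and s: "s \<in> intO v" and c: "c \<noteq> 1"
    and shift: "\<And>t. t \<in> intO v \<Longrightarrow> g (t + s) = c * g t"
  shows "riemann_O v g N = 0"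
proof -
  have "riemann_O v g N = riemann_O v (\<lambda>t. g (t + s)) N"
    using riemann_O_translate[OF g s] by simp
  also have "\<dots> = riemann_O v (\<lambda>t. c * g t) N"
    using shift by (rule riemann_O_cong)
  also have "\<dots> = c * riemann_O v g N"
    by (rule riemann_O_mult_left)
  finally show ?thesis
    using c by (metis mult_cancel_right2)
qed

lemma norm_riemann_O_indicator_le:
  assumes C: "C \<in> residues k" and kN: "k \<le> N" and g: "\<And>x. norm (g x) \<le> 1"
  shows "norm (riemann_O v (\<lambda>x. indicator C x * g x) N) \<le> 1 / real q ^ k"
proof -
  have term_le: "norm (indicator C (rep C') * g (rep C')) \<le> (if C' \<subseteq> C then 1 else 0)"
    if "C' \<in> residues N" for C'
    using g[of "rep C'"] residue_subset_iff[OF C that kN] by (auto simp: norm_mult)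
  have "norm (\<Sum>C'\<in>residues N. indicator C (rep C') * g (rep C'))
      \<le> (\<Sum>C'\<in>residues N. norm (indicator C (rep C') * g (rep C')))"
    by (rule norm_sum)
  also have "\<dots> \<le> (\<Sum>C'\<in>residues N. if C' \<subseteq> C then 1 else 0)"
    using term_le by (rule sum_mono)
  also have "\<dots> = real (q ^ (N - k))"
    using card_residues_in_residue[OF C kN] sum.inter_filter[OF finite_residues, of "\<lambda>_. 1::real", symmetric]
    by simp
  finally have "norm (riemann_O v (\<lambda>x. indicator C x * g x) N) \<le> real q ^ (N - k) / real q ^ N"
    unfolding riemann_O_eq norm_divide by (simp add: norm_power divide_right_mono)
  also have "\<dots> = 1 / real q ^ k"
    using q_pos kN by (simp add: power_diff)
  finally show ?thesis .
qed

lemma riemann_O_indicator_scale: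
  assumes G: "locally_const (Suc N) G"
  shows "riemann_O v (\<lambda>t. indicator (coset 1 0) t * G t) (Suc N)
       = riemann_O v (\<lambda>u. G (uniformizer * u)) N / of_nat q"
proof -
  have c: "coset 1 0 \<in> residues 1"
    using coset_in_residues by (simp add: mem_intO_iff)
  have "(\<Sum>C\<in>residues (Suc N). indicator (coset 1 0) (rep C) * G (rep C))
      = (\<Sum>C\<in>residues (Suc N). if C \<subseteq> coset 1 0 then G (rep C) else 0)"
    using residue_subset_iff[OF c] by (intro sum.cong refl) (simp add: indicator_def)
  also have "\<dots> = (\<Sum>C\<in>{C \<in> residues (Suc N). C \<subseteq> coset 1 0}. G (rep C))"
    by (rule sum.inter_filter[OF finite_residues, symmetric])
  also have "\<dots> = (\<Sum>D\<in>residues N. G (rep (coset (Suc N) (uniformizer * rep D))))"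
    using sum.reindex_bij_betw[OF bij_betw_residues_in_coset[of 0 1 "Suc N"], of "\<lambda>C. G (rep C)"]
    by (simp add: mem_intO_iff)
  also have "\<dots> = (\<Sum>D\<in>residues N. G (uniformizer * rep D))"
  proof (rule sum.cong[OF refl])
    fix D
    assume "D \<in> residues N"
    then have "uniformizer * rep D \<in> intO v"
      using uniformizer_mult_mem_coset rep_in_intO coset_subset_intO by blast
    then show "G (rep (coset (Suc N) (uniformizer * rep D))) = G (uniformizer * rep D)"
      using locally_const_rep[OF G coset_in_residues coset_self] by simp
  qed
  finally show ?thesis
    unfolding riemann_O_eq by (simp add: divide_divide_eq_left)
qed

section \<open>Square roots of units\<close>

text \<open>Otherwise \<open>C \<mapsto> C + 1\<close> would be a fixed-point-free involution of the residue field,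
  whose cardinality \<open>q\<close> is odd.\<close>
lemma v_two: "v (2::'a) = 0"
proof (rule ccontr)
  assume "v (2::'a) \<noteq> 0"
  moreover have "(2::'a) \<noteq> 0" "val_ge 0 (2::'a)"
    using of_nat_neq_0[of 2] val_ge_of_nat[of 2] by simp_all
  ultimately have two: "val_ge 1 (2::'a)"
    by (simp add: val_ge_def)
  define f where "f C = coset 1 (rep C + 1)" for C
  have plus_one: "x + 1 \<in> intO v" if "x \<in> intO v" for x
    using that val_ge_add[of 0 x 1] by (simp add: mem_intO_iff val_ge_def)
  have "even (card (residues 1))"
  proof (rule even_card_involution[where f = f])
    fix C
    assume C: "C \<in> residues 1"
    show "f C \<in> residues 1"
      unfolding f_def using coset_in_residues plus_one rep_in_intO[OF C] by blast
    obtain r where r: "r = rep (f C)" "r \<in> intO v" "val_ge 1 (r - (rep C + 1))"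
      using rep_coset[OF plus_one[OF rep_in_intO[OF C]], of 1] f_def by auto
    then have "val_ge 1 ((r + 1) - rep C)"
      using val_ge_add[OF r(3) two] by (simp add: algebra_simps)
    then have "coset 1 (r + 1) = coset 1 (rep C)"
      using coset_eq_iff[OF plus_one[OF r(2)] rep_in_intO[OF C], of 1] by simp
    then have "coset 1 (r + 1) = C"
      using residue_rep(2)[OF C] by simp
    then show "f (f C) = C"
      using r(1) f_def by simp
    have "\<not> val_ge 1 ((rep C + 1) - rep C)"
      by (simp add: val_ge_def)
    then have "coset 1 (rep C + 1) \<noteq> coset 1 (rep C)"
      using coset_eq_iff[OF plus_one rep_in_intO, OF rep_in_intO[OF C] C, of 1] by simp
    then show "f C \<noteq> C"
      unfolding f_def using residue_rep(2)[OF C] by simp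
  qed (rule finite_residues)
  then show False
    using odd_q card_residues[of 1] by simp
qed

lemma v_unit: "u \<in> units_O \<Longrightarrow> u \<noteq> 0 \<and> v u = 0"
  unfolding units_O_def mem_intO_iff val_ge_def by auto

lemma v_cubic_derivative_at_unit:
  assumes "a \<noteq> 0" "t \<in> units_O"
  shows "3 * a * t ^ 2 \<noteq> 0 \<and> v (3 * a * t ^ 2) = v 3 + v a"
  using assms v_unit[OF assms(2)] three_neq_0 by (simp add: v_mult v_power)

lemma units_square_cong:
  assumes u: "u \<in> units_O" and u': "u' \<in> units_O" and sq: "val_ge n (u ^ 2 - u' ^ 2)"
  shows "val_ge n (u - u') \<or> val_ge n (u + u')"
proof -
  have factor: "u ^ 2 - u' ^ 2 = (u - u') * (u + u')"
    by (simp add: power2_eq_square algebra_simps)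
  have "val_ge 0 u" "val_ge 0 u'"
    using u u' by (simp_all add: units_O_def mem_intO_iff)
  then have int: "val_ge 0 (u - u')" "val_ge 0 (u + u')"
    by (simp_all add: val_ge_diff val_ge_add)
  have "v (2 * u) = 0"
    using v_unit[OF u] v_two v_mult[of 2 u] of_nat_neq_0[of 2] by simp
  then have "\<not> (val_ge 1 (u + u') \<and> val_ge 1 (u - u'))"
    using val_ge_add[of 1 "u + u'" "u - u'"] v_unit[OF u] of_nat_neq_0[of 2]
    by (auto simp: val_ge_def)
  then consider "u + u' \<noteq> 0" "v (u + u') = 0" | "u - u' \<noteq> 0" "v (u - u') = 0" | "u + u' = 0"
    using int by (force simp: val_ge_def)
  then show ?thesis
  proof cases
    case 1
    then show ?thesis
      using val_ge_divide_unit[OF sq[unfolded factor], of "u + u'"] by simp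
  next
    case 2
    then show ?thesis
      using val_ge_divide_unit[OF sq[unfolded factor], of "u - u'"] by simp
  qed simp
qed

lemma residue_subset_coset_if_square_cong:
  assumes L: "L \<le> k" and C: "C \<in> residues k" "C \<subseteq> units_O"
    and u: "u \<in> units_O" and sq: "val_ge (int L) (rep C ^ 2 - u ^ 2)"
  shows "C \<subseteq> coset L u \<or> C \<subseteq> coset L (- u)"
proof -
  have r: "rep C \<in> units_O" "rep C \<in> intO v"
    using C residue_rep(1) rep_in_intO by blast+
  have "u \<in> intO v" "- u \<in> intO v"
    using u by (auto simp: units_O_def mem_intO_iff)
  moreover have "val_ge (int L) (rep C - u) \<or> val_ge (int L) (rep C - - u)"
    using units_square_cong[OF r(1) u sq] by simp
  ultimately have "coset L (rep C) = coset L u \<or> coset L (rep C) = coset L (- u)"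
    using coset_eq_iff[OF r(2)] by blast
  moreover have "C \<subseteq> coset L (rep C)"
    using coset_mono[OF L r(2)] residue_rep(2)[OF C(1)] by simp
  ultimately show ?thesis
    by auto
qed

lemma card_residues_square_cong_le:
  assumes "L \<le> k"
  shows "card {C \<in> residues k. C \<subseteq> units_O \<and> val_ge (int L) (rep C ^ 2 - c)} \<le> 2 * q ^ (k - L)"
proof (cases "\<exists>C\<in>residues k. C \<subseteq> units_O \<and> val_ge (int L) (rep C ^ 2 - c)")
  case True
  then obtain C' where C': "C' \<in> residues k" "C' \<subseteq> units_O" "val_ge (int L) (rep C' ^ 2 - c)"
    by blast
  define u where "u = rep C'"
  have u: "u \<in> units_O" "u \<in> intO v" "- u \<in> intO v"
    using C' residue_rep(1) rep_in_intO u_def by (auto simp: mem_intO_iff)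
  have "C \<subseteq> coset L u \<or> C \<subseteq> coset L (- u)"
    if "C \<in> residues k" "C \<subseteq> units_O" "val_ge (int L) (rep C ^ 2 - c)" for C
    using residue_subset_coset_if_square_cong[OF assms that(1,2) u(1)] val_ge_diff[OF that(3) C'(3)]
    by (simp add: u_def)
  then have "{C \<in> residues k. C \<subseteq> units_O \<and> val_ge (int L) (rep C ^ 2 - c)}
      \<subseteq> {C \<in> residues k. C \<subseteq> coset L u} \<union> {C \<in> residues k. C \<subseteq> coset L (- u)}"
    by blast
  then have "card {C \<in> residues k. C \<subseteq> units_O \<and> val_ge (int L) (rep C ^ 2 - c)}
      \<le> card ({C \<in> residues k. C \<subseteq> coset L u} \<union> {C \<in> residues k. C \<subseteq> coset L (- u)})"
    by (rule card_mono[rotated]) (simp add: finite_residues)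
  also have "\<dots> \<le> card {C \<in> residues k. C \<subseteq> coset L u} + card {C \<in> residues k. C \<subseteq> coset L (- u)}"
    by (rule card_Un_le)
  also have "\<dots> = 2 * q ^ (k - L)"
    using card_residues_in_residue[OF coset_in_residues assms] u by simp
  finally show ?thesis .
next
  case False
  then have "{C \<in> residues k. C \<subseteq> units_O \<and> val_ge (int L) (rep C ^ 2 - c)} = {}"
    by blast
  then show ?thesis
    by (metis card.empty le0)
qed

end

section \<open>The cubic exponential integral\<close>

locale unramified_local_field = nonarch_local_field v for v :: "'a::field \<Rightarrow> int" +
  fixes \<psi> :: "'a \<Rightarrow> complex"
  assumes unramified: "unramified_character v \<psi>"
begin

lemma psi_add: "\<psi> (x + y) = \<psi> x * \<psi> y"
  using unramified unfolding unramified_character_def by blast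

lemma norm_psi: "norm (\<psi> x) = 1"
  using unramified unfolding unramified_character_def by blast

lemma psi_nontrivial: "\<exists>x. x \<noteq> 0 \<and> v x = -1 \<and> \<psi> x \<noteq> 1"
  using unramified unfolding unramified_character_def by blast

lemma psi_eq_if_diff_intO:
  assumes "val_ge 0 (x - y)"
  shows "\<psi> x = \<psi> y"
proof -
  have "x - y \<in> intO v"
    using assms by (simp add: mem_intO_iff)
  then have "\<psi> (x - y) = 1"
    using unramified unfolding unramified_character_def by blast
  then show ?thesis
    using psi_add[of y "x - y"] by simp
qed

definition airy_phase :: "'a \<Rightarrow> 'a \<Rightarrow> 'a \<Rightarrow> complex" where
  "airy_phase a b t = \<psi> (a * t ^ 3 + b * t)"

definition airy_int :: "'a \<Rightarrow> 'a \<Rightarrow> complex" where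
  "airy_int a b = haar_int_O v (airy_phase a b)"

definition airy_int_on :: "'a set \<Rightarrow> 'a \<Rightarrow> 'a \<Rightarrow> complex" where
  "airy_int_on C a b = haar_int_O v (\<lambda>t. indicator C t * airy_phase a b t)"

lemma norm_airy_phase: "norm (airy_phase a b t) = 1"
  by (simp add: airy_phase_def norm_psi)

lemma airy_phase_scale:
  "airy_phase a b (uniformizer * u) = airy_phase (a * uniformizer ^ 3) (b * uniformizer) u"
  by (simp add: airy_phase_def algebra_simps power_mult_distrib)

lemma locally_const_airy_phase:
  assumes a: "val_ge (- int N) a" and b: "val_ge (- int N) b"
  shows "locally_const N (airy_phase a b)"
  unfolding locally_const_def
proof (intro ballI impI)
  fix x y
  assume "x \<in> intO v" "y \<in> intO v" and xy: "val_ge (int N) (x - y)"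
  then have "val_ge 0 (x ^ 2 + x * y + y ^ 2)"
    using val_ge_add val_ge_mult[of 0 x 0 y] val_ge_power[of 0 _ 2] by (simp add: mem_intO_iff)
  then have "val_ge (- int N) (a * (x ^ 2 + x * y + y ^ 2))"
    using val_ge_mult[OF a] by fastforce
  then have "val_ge (- int N) (a * (x ^ 2 + x * y + y ^ 2) + b)"
    using val_ge_add b by blast
  then have "val_ge 0 ((x - y) * (a * (x ^ 2 + x * y + y ^ 2) + b))"
    using val_ge_mult[OF xy] by fastforce
  moreover have "(x - y) * (a * (x ^ 2 + x * y + y ^ 2) + b)
      = (a * x ^ 3 + b * x) - (a * y ^ 3 + b * y)"
    by (simp add: algebra_simps power2_eq_square power3_eq_cube)
  ultimately show "airy_phase a b x = airy_phase a b y"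
    unfolding airy_phase_def using psi_eq_if_diff_intO by simp
qed

lemma ex_locally_const_airy_phase: "\<exists>N\<ge>K. locally_const N (airy_phase a b)"
proof -
  define N where "N = K + nat (- v a) + nat (- v b)"
  have "val_ge (- int N) a" "val_ge (- int N) b"
    unfolding N_def val_ge_def by auto
  then have "locally_const N (airy_phase a b)"
    by (rule locally_const_airy_phase)
  moreover have "K \<le> N"
    by (simp add: N_def)
  ultimately show ?thesis
    by blast
qed

lemma norm_airy_int_le_1: "norm (airy_int a b) \<le> 1"
proof -
  obtain N where N: "locally_const N (airy_phase a b)"
    using ex_locally_const_airy_phase by blast
  have "norm (riemann_O v (\<lambda>t. indicator (coset 0 0) t * airy_phase a b t) N) \<le> 1"
    using norm_riemann_O_indicator_le[of "coset 0 0" 0 N] coset_in_residues norm_airy_phase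
    by (simp add: mem_intO_iff)
  moreover have "riemann_O v (\<lambda>t. indicator (coset 0 0) t * airy_phase a b t) N
      = riemann_O v (airy_phase a b) N"
    using coset_0 by (intro riemann_O_cong) (simp add: mem_intO_iff)
  ultimately show ?thesis
    unfolding airy_int_def using haar_int_O_eq_riemann_O[OF N] by simp
qed

lemma norm_airy_int_on_residue_le:
  assumes "C \<in> residues k"
  shows "norm (airy_int_on C a b) \<le> 1 / real q ^ k"
proof -
  obtain N where N: "N \<ge> k" "locally_const N (airy_phase a b)"
    using ex_locally_const_airy_phase by blast
  then have "locally_const N (\<lambda>t. indicator C t * airy_phase a b t)"
    using locally_const_mult locally_const_indicator_residue assms by blast
  then have "airy_int_on C a b = riemann_O v (\<lambda>t. indicator C t * airy_phase a b t) N"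
    unfolding airy_int_on_def by (rule haar_int_O_eq_riemann_O)
  then show ?thesis
    using norm_riemann_O_indicator_le[OF assms N(1)] norm_airy_phase by simp
qed

lemma coset_subset_units_O: "u \<in> units_O \<Longrightarrow> 1 \<le> k \<Longrightarrow> coset k u \<subseteq> units_O"
proof
  fix y
  assume u: "u \<in> units_O" and k: "1 \<le> k" and "y \<in> coset k u"
  then have y: "y \<in> intO v" "val_ge 1 (y - u)"
    using val_ge_mono[of "int k" _ 1] by (auto simp: units_O_def mem_coset_iff)
  have "\<not> val_ge 1 y"
    using val_ge_diff[of 1 y "y - u"] y(2) u by (auto simp: units_O_def)
  then show "y \<in> units_O"
    using y(1) by (simp add: units_O_def)
qed

lemma indicator_units_O_eq_sum:
  assumes k: "1 \<le> k" and x: "x \<in> intO v"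
  shows "indicator units_O x = (\<Sum>C\<in>{C \<in> residues k. C \<subseteq> units_O}. indicator C x :: complex)"
proof -
  have "(\<Sum>C\<in>{C \<in> residues k. C \<subseteq> units_O}. indicator C x :: complex)
      = (\<Sum>C\<in>{C \<in> residues k. C \<subseteq> units_O}. if coset k x = C then 1 else 0)"
  proof (rule sum.cong[OF refl])
    fix C
    assume "C \<in> {C \<in> residues k. C \<subseteq> units_O}"
    then have "x \<in> C \<longleftrightarrow> coset k x = C"
      using mem_residue_iff x by blast
    then show "indicator C x = (if coset k x = C then 1 else 0 :: complex)"
      by (simp add: indicator_def)
  qed
  also have "\<dots> = (if coset k x \<in> {C \<in> residues k. C \<subseteq> units_O} then 1 else 0)"
    using finite_residues by (simp add: sum.delta)
  also have "\<dots> = indicator units_O x"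
    using coset_subset_units_O[OF _ k] coset_self[OF x] coset_in_residues[OF x]
    by (auto simp: indicator_def)
  finally show ?thesis
    by simp
qed

lemma airy_int_on_units_O_eq_sum:
  assumes k: "1 \<le> k"
  shows "airy_int_on units_O a b = (\<Sum>C\<in>{C \<in> residues k. C \<subseteq> units_O}. airy_int_on C a b)"
proof -
  obtain N where N: "N \<ge> k" "locally_const N (airy_phase a b)"
    using ex_locally_const_airy_phase by blast
  let ?S = "{C \<in> residues k. C \<subseteq> units_O}"
  have "locally_const N (\<lambda>t. indicator units_O t * airy_phase a b t)"
    using locally_const_mult[OF locally_const_indicator_units N(2)] N(1) k by simp
  then have "airy_int_on units_O a b = riemann_O v (\<lambda>t. indicator units_O t * airy_phase a b t) N"
    unfolding airy_int_on_def by (rule haar_int_O_eq_riemann_O)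
  also have "\<dots> = riemann_O v (\<lambda>t. \<Sum>C\<in>?S. indicator C t * airy_phase a b t) N"
    using indicator_units_O_eq_sum[OF k] by (intro riemann_O_cong) (simp add: sum_distrib_right)
  also have "\<dots> = (\<Sum>C\<in>?S. riemann_O v (\<lambda>t. indicator C t * airy_phase a b t) N)"
    using finite_residues by (simp add: riemann_O_sum)
  also have "\<dots> = (\<Sum>C\<in>?S. airy_int_on C a b)"
  proof (rule sum.cong[OF refl])
    fix C
    assume "C \<in> ?S"
    then have "locally_const N (\<lambda>t. indicator C t * airy_phase a b t)"
      using locally_const_mult[OF locally_const_indicator_residue N(2)] N(1) by blast
    then show "riemann_O v (\<lambda>t. indicator C t * airy_phase a b t) N = airy_int_on C a b"
      unfolding airy_int_on_def by (simp add: haar_int_O_eq_riemann_O)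
  qed
  finally show ?thesis .
qed

lemma airy_int_recursion:
  "airy_int a b
    = airy_int_on units_O a b + airy_int (a * uniformizer ^ 3) (b * uniformizer) / of_nat q"
proof -
  obtain M where M: "2 \<le> M" "locally_const M (airy_phase a b)"
    using ex_locally_const_airy_phase by blast
  define N where "N = M - 1"
  then have N: "locally_const (Suc N) (airy_phase a b)" "1 \<le> N"
    using M by (simp_all add: Suc_diff_Suc numeral_2_eq_2)
  let ?\<phi> = "airy_phase a b"
  have scaled: "locally_const N (airy_phase (a * uniformizer ^ 3) (b * uniformizer))"
    using locally_const_scale[OF N(1)] by (simp add: airy_phase_scale)
  have units: "locally_const (Suc N) (\<lambda>t. indicator units_O t * ?\<phi> t)"
    using locally_const_mult[OF locally_const_indicator_units N(1)] by simp
  have "airy_int a b = riemann_O v ?\<phi> (Suc N)"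
    unfolding airy_int_def using N(1) by (rule haar_int_O_eq_riemann_O)
  also have "\<dots> = riemann_O v (\<lambda>t. indicator units_O t * ?\<phi> t + indicator (coset 1 0) t * ?\<phi> t) (Suc N)"
  proof (rule riemann_O_cong)
    fix t
    assume "t \<in> intO v"
    then show "?\<phi> t = indicator units_O t * ?\<phi> t + indicator (coset 1 0) t * ?\<phi> t"
      by (cases "t \<in> coset 1 0") (simp_all add: units_O_eq)
  qed
  also have "\<dots> = riemann_O v (\<lambda>t. indicator units_O t * ?\<phi> t) (Suc N)
      + riemann_O v (\<lambda>u. ?\<phi> (uniformizer * u)) N / of_nat q"
    unfolding riemann_O_add riemann_O_indicator_scale[OF N(1)] ..
  also have "\<dots> = airy_int_on units_O a b + airy_int (a * uniformizer ^ 3) (b * uniformizer) / of_nat q"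
    unfolding airy_int_on_def airy_int_def airy_phase_scale
      haar_int_O_eq_riemann_O[OF units] haar_int_O_eq_riemann_O[OF scaled] ..
  finally show ?thesis .
qed

lemma airy_int_on_intO: "airy_int_on (intO v) a b = airy_int a b"
proof -
  obtain N where N: "locally_const N (airy_phase a b)"
    using ex_locally_const_airy_phase by blast
  have "locally_const N (\<lambda>t. indicator (intO v) t * airy_phase a b t)"
    using locally_const_mult[OF locally_const_indicator_coset[of 0 0 N] N] coset_0[of 0]
    by (simp add: mem_intO_iff)
  then have "airy_int_on (intO v) a b = riemann_O v (\<lambda>t. indicator (intO v) t * airy_phase a b t) N"
    unfolding airy_int_on_def by (rule haar_int_O_eq_riemann_O)
  also have "\<dots> = riemann_O v (airy_phase a b) N"
    by (rule riemann_O_cong) simp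
  also have "\<dots> = airy_int a b"
    unfolding airy_int_def using haar_int_O_eq_riemann_O[OF N] by simp
  finally show ?thesis .
qed

lemma add_mem_coset_iff:
  assumes "t0 \<in> intO v" "t \<in> intO v" "val_ge (int k) s"
  shows "t + s \<in> coset k t0 \<longleftrightarrow> t \<in> coset k t0"
proof -
  have "t + s - t0 = (t - t0) + s" "t - t0 = (t + s - t0) - s"
    by simp_all
  then have "val_ge (int k) (t + s - t0) \<longleftrightarrow> val_ge (int k) (t - t0)"
    using assms(3) val_ge_add val_ge_diff by metis
  moreover have "t + s \<in> intO v"
    using assms(2,3) val_ge_add val_ge_mono[of "int k" s 0] by (simp add: mem_intO_iff)
  ultimately show ?thesis
    using assms(1,2) by (simp add: mem_coset_iff)
qed

text \<open>By translation invariance, the shift multiplies the integral by \<open>\<psi> w \<noteq> 1\<close>.\<close>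
lemma airy_int_on_coset_eq_0_if_shift:
  assumes t0: "t0 \<in> intO v" and s: "val_ge (int k) s" and w: "\<psi> w \<noteq> 1"
    and shift: "\<And>t. t \<in> coset k t0 \<Longrightarrow>
      val_ge 0 (a * (t + s) ^ 3 + b * (t + s) - (a * t ^ 3 + b * t) - w)"
  shows "airy_int_on (coset k t0) a b = 0"
proof -
  obtain N where N: "N \<ge> k" "locally_const N (airy_phase a b)"
    using ex_locally_const_airy_phase by blast
  define g where "g = (\<lambda>t. indicator (coset k t0) t * airy_phase a b t)"
  have g: "locally_const N g"
    unfolding g_def using locally_const_mult[OF locally_const_indicator_coset[OF t0 N(1)] N(2)] .
  have phase_shift: "airy_phase a b (t + s) = \<psi> w * airy_phase a b t" if "t \<in> coset k t0" for t
  proof -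
    have "val_ge 0 ((a * (t + s) ^ 3 + b * (t + s)) - ((a * t ^ 3 + b * t) + w))"
      using shift[OF that] by (simp add: algebra_simps)
    then have "\<psi> (a * (t + s) ^ 3 + b * (t + s)) = \<psi> ((a * t ^ 3 + b * t) + w)"
      by (rule psi_eq_if_diff_intO)
    then show ?thesis
      unfolding airy_phase_def by (simp add: psi_add mult.commute)
  qed
  have "riemann_O v g N = 0"
  proof (rule riemann_O_eq_0_if_translate_mult[OF g _ w])
    show "s \<in> intO v"
      using val_ge_mono[OF s] by (simp add: mem_intO_iff)
    show "g (t + s) = \<psi> w * g t" if "t \<in> intO v" for t
      using add_mem_coset_iff[OF t0 that s] phase_shift by (simp add: g_def indicator_def)
  qed
  then show ?thesis
    unfolding airy_int_on_def g_def[symmetric] using haar_int_O_eq_riemann_O[OF g] by simp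
qed

lemma val_ge_cubic_shift:
  assumes t0: "t0 \<in> intO v" and t: "t \<in> coset k t0" and s: "val_ge \<delta> s"
    and "int k \<le> \<delta>" and linear: "0 \<le> v 3 + v a + int k + \<delta>" and cubic: "0 \<le> v a + 3 * \<delta>"
  shows "val_ge 0 (a * (t + s) ^ 3 + b * (t + s) - (a * t ^ 3 + b * t) - (3 * a * t0 ^ 2 + b) * s)"
proof -
  have t: "val_ge 0 t" "val_ge (int k) (t - t0)"
    using t t0 by (simp_all add: mem_coset_iff mem_intO_iff)
  have three_a: "val_ge (v 3 + v a) (3 * a)"
    using val_ge_mult[OF val_ge_self val_ge_self] .
  have "val_ge 0 (t + t0)"
    using val_ge_add t(1) t0 by (simp add: mem_intO_iff)
  then have "val_ge (v 3 + v a + int k + 0 + \<delta>) (3 * a * (t - t0) * (t + t0) * s)"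
    using val_ge_mult[OF val_ge_mult[OF val_ge_mult[OF three_a t(2)]] s] by blast
  then have T1: "val_ge 0 (3 * a * (t - t0) * (t + t0) * s)"
    by (rule val_ge_mono) (use linear in simp)
  have "val_ge (v 3 + v a + 0 + int 2 * \<delta>) (3 * a * t * s ^ 2)"
    using val_ge_mult[OF val_ge_mult[OF three_a t(1)] val_ge_power[OF s]] .
  then have T2: "val_ge 0 (3 * a * t * s ^ 2)"
    by (rule val_ge_mono) (use linear assms(4) in simp)
  have "val_ge (v a + int 3 * \<delta>) (a * s ^ 3)"
    using val_ge_mult[OF val_ge_self val_ge_power[OF s]] .
  then have T3: "val_ge 0 (a * s ^ 3)"
    by (rule val_ge_mono) (use cubic in simp)
  have "a * (t + s) ^ 3 + b * (t + s) - (a * t ^ 3 + b * t) - (3 * a * t0 ^ 2 + b) * s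
      = 3 * a * (t - t0) * (t + t0) * s + 3 * a * t * s ^ 2 + a * s ^ 3"
    by (simp add: algebra_simps power2_eq_square power3_eq_cube)
  then show ?thesis
    using val_ge_add[OF val_ge_add[OF T1 T2] T3] by simp
qed

text \<open>Shift by \<open>s = x / D\<close>, where \<open>D = 3 a t\<^sub>0\<^sup>2 + b\<close> is the derivative of the phase at \<open>t\<^sub>0\<close>
  and \<open>v x = -1\<close>, \<open>\<psi> x \<noteq> 1\<close>.\<close>
lemma airy_int_on_coset_eq_0:
  assumes t0: "t0 \<in> intO v" and D: "3 * a * t0 ^ 2 + b \<noteq> 0"
    and k: "int k + v (3 * a * t0 ^ 2 + b) + 1 \<le> 0"
    and linear: "v (3 * a * t0 ^ 2 + b) + 1 \<le> v 3 + v a + int k"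
    and cubic: "3 * (v (3 * a * t0 ^ 2 + b) + 1) \<le> v a"
  shows "airy_int_on (coset k t0) a b = 0"
proof -
  obtain x where x: "x \<noteq> 0" "v x = -1" "\<psi> x \<noteq> 1"
    using psi_nontrivial by blast
  define s where "s = x / (3 * a * t0 ^ 2 + b)"
  have "v s = - v (3 * a * t0 ^ 2 + b) - 1"
    using v_divide[OF x(1) D] x(2) by (simp add: s_def)
  then have s: "val_ge (- v (3 * a * t0 ^ 2 + b) - 1) s"
    using val_ge_self by metis
  have x_eq: "(3 * a * t0 ^ 2 + b) * s = x"
    using D by (simp add: s_def)
  show ?thesis
  proof (rule airy_int_on_coset_eq_0_if_shift[OF t0 _ x(3)])
    show "val_ge (int k) s"
      using val_ge_mono[OF s] k by simp
    fix t
    assume "t \<in> coset k t0"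
    then have "val_ge 0 (a * (t + s) ^ 3 + b * (t + s) - (a * t ^ 3 + b * t) - (3 * a * t0 ^ 2 + b) * s)"
      by (rule val_ge_cubic_shift[OF t0 _ s]) (use k linear cubic in \<open>simp_all add: algebra_simps\<close>)
    then show "val_ge 0 (a * (t + s) ^ 3 + b * (t + s) - (a * t ^ 3 + b * t) - x)"
      by (simp only: x_eq)
  qed
qed

lemma airy_int_on_units_O_eq_0:
  assumes D: "\<And>t. t \<in> units_O \<Longrightarrow> 3 * a * t ^ 2 + b \<noteq> 0 \<and> v (3 * a * t ^ 2 + b) = d"
    and "d \<le> -2" "d \<le> v 3 + v a" "3 * (d + 1) \<le> v a"
  shows "airy_int_on units_O a b = 0"
proof -
  have "airy_int_on C a b = 0" if "C \<in> residues 1" "C \<subseteq> units_O" for C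
  proof -
    have "rep C \<in> units_O"
      using that residue_rep(1) by blast
    then have "airy_int_on (coset 1 (rep C)) a b = 0"
      using D assms(2-4) by (intro airy_int_on_coset_eq_0) (auto simp: units_O_def)
    then show ?thesis
      using residue_rep(2)[OF that(1)] by simp
  qed
  then show ?thesis
    using airy_int_on_units_O_eq_sum[of 1] by simp
qed


lemma airy_int_on_units_O_eq_0_if_a_dominant:
  assumes a: "a \<noteq> 0" and b: "b = 0 \<or> v 3 + v a < v b"
    and "v 3 + v a \<le> -2" "2 * v a + 3 * v 3 + 3 \<le> 0"
  shows "airy_int_on units_O a b = 0"
proof (rule airy_int_on_units_O_eq_0)
  fix t
  assume "t \<in> units_O"
  then have t: "3 * a * t ^ 2 \<noteq> 0" "v (3 * a * t ^ 2) = v 3 + v a"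
    using v_cubic_derivative_at_unit[OF a] by simp_all
  show "3 * a * t ^ 2 + b \<noteq> 0 \<and> v (3 * a * t ^ 2 + b) = v 3 + v a"
  proof (cases "b = 0")
    case False
    then show ?thesis
      using v_add_eq_left[OF t(1) False] t(2) b by simp
  qed (use t in simp)
qed (use assms in auto)

lemma airy_int_on_units_O_eq_0_if_b_dominant:
  assumes a: "a \<noteq> 0" and b: "b \<noteq> 0" "v b < v 3 + v a"
    and "v b \<le> -2" "3 * v b + 3 \<le> v a"
  shows "airy_int_on units_O a b = 0"
proof (rule airy_int_on_units_O_eq_0)
  fix t
  assume "t \<in> units_O"
  then show "3 * a * t ^ 2 + b \<noteq> 0 \<and> v (3 * a * t ^ 2 + b) = v b"
    using v_cubic_derivative_at_unit[OF a] v_add_eq_left[OF b(1)] b(2) by (metis add.commute)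
qed (use assms in auto)

section \<open>Vanishing and bounds\<close>

lemma airy_int_eq_0_if_v_b_lt_v_a:
  assumes "b \<noteq> 0" "v b < v a" "v b \<le> -1"
  shows "airy_int a b = 0"
  using airy_int_on_coset_eq_0[of 0 a b 0] assms v_three_nonneg coset_0[of 0] airy_int_on_intO
  by (simp add: mem_intO_iff)

lemma airy_int_eq_0_if_b_dominant:
  assumes "a \<noteq> 0" "b \<noteq> 0" "v b < v 3 + v a" "3 * v b + 3 \<le> v a" "v b \<le> -1"
  shows "airy_int a b = 0"
  using assms
proof (induction "nat (- v b)" arbitrary: a b rule: less_induct)
  case less
  show ?case
  proof (cases "v b < v a")
    case True
    then show ?thesis
      using airy_int_eq_0_if_v_b_lt_v_a less.prems by blast
  next
    case False
    then have "v b \<le> -2"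
      using less.prems by linarith
    then have "airy_int_on units_O a b = 0"
      using airy_int_on_units_O_eq_0_if_b_dominant less.prems by blast
    moreover have "airy_int (a * uniformizer ^ 3) (b * uniformizer) = 0"
      using v_mult_uniformizer_power[of a 3] v_mult_uniformizer_power[of b 1] less.prems \<open>v b \<le> -2\<close>
      by (intro less.hyps) auto
    ultimately show ?thesis
      using airy_int_recursion[of a b] by simp
  qed
qed

lemma norm_airy_int_descent:
  assumes "airy_int_on units_O a b = 0"
    and "norm (airy_int (a * uniformizer ^ 3) (b * uniformizer)) \<le> C * real q powr (E + 1)"
  shows "norm (airy_int a b) \<le> C * real q powr E"
proof -
  have "norm (airy_int a b) = norm (airy_int (a * uniformizer ^ 3) (b * uniformizer)) / real q"
    using airy_int_recursion[of a b] assms(1) by (simp add: norm_divide)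
  also have "\<dots> \<le> C * real q powr (E + 1) / real q"
    using assms(2) q_pos by (simp add: divide_right_mono)
  also have "\<dots> = C * real q powr E"
    using q_pos by (simp add: powr_add)
  finally show ?thesis .
qed

lemma norm_airy_int_le_powr:
  assumes "0 \<le> E" "1 \<le> C"
  shows "norm (airy_int a b) \<le> C * real q powr E"
proof -
  have "1 \<le> real q powr E"
    using q_pos assms(1) by (intro ge_one_powr_ge_zero) auto
  then have "1 * 1 \<le> C * real q powr E"
    using assms(2) by (intro mult_mono) auto
  then show ?thesis
    using norm_airy_int_le_1[of a b] by simp
qed

lemma norm_airy_int_le_if_v_b_large:
  "a \<noteq> 0 \<Longrightarrow> b = 0 \<or> v a \<le> 3 * v b \<Longrightarrow>
    norm (airy_int a b) \<le> real q powr (1 + real_of_int (v 3) + real_of_int (v a) / 3)"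
proof (induction "nat (- v a)" arbitrary: a b rule: less_induct)
  case less
  show ?case
  proof (cases "- v a \<le> 3 + 3 * v 3")
    case True
    then show ?thesis
      using norm_airy_int_le_powr[of "1 + real_of_int (v 3) + real_of_int (v a) / 3" 1] by simp
  next
    case False
    have "airy_int_on units_O a b = 0"
      using less.prems False v_three_nonneg
      by (intro airy_int_on_units_O_eq_0_if_a_dominant) linarith+
    moreover
    have a': "a * uniformizer ^ 3 \<noteq> 0" "v (a * uniformizer ^ 3) = v a + 3"
      using v_mult_uniformizer_power[of a 3] less.prems(1) by simp_all
    have "b * uniformizer = 0 \<or> v (a * uniformizer ^ 3) \<le> 3 * v (b * uniformizer)"
      using v_mult_uniformizer_power[of b 1] a'(2) less.prems(2) by (cases "b = 0") auto
    then have "norm (airy_int (a * uniformizer ^ 3) (b * uniformizer))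
        \<le> real q powr (1 + real_of_int (v 3) + real_of_int (v (a * uniformizer ^ 3)) / 3)"
      using less.hyps[OF _ a'(1)] a'(2) False v_three_nonneg by simp
    then have "norm (airy_int (a * uniformizer ^ 3) (b * uniformizer))
        \<le> 1 * real q powr ((1 + real_of_int (v 3) + real_of_int (v a) / 3) + 1)"
      using a'(2) by (simp add: add_divide_distrib algebra_simps)
    ultimately show ?thesis
      using norm_airy_int_descent by fastforce
  qed
qed

lemma airy_int_on_residue_eq_0_off_stationary:
  assumes a: "a \<noteq> 0" and C: "C \<in> residues k" and L: "L \<le> k"
    and level: "int k + int L + v 3 + v a \<le> 0" and cubic: "3 * (v 3 + v a + int L) \<le> v a"
    and off: "\<not> val_ge (int L) (rep C ^ 2 - - b / (3 * a))"
  shows "airy_int_on C a b = 0"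
proof -
  define w where "w = rep C ^ 2 - - b / (3 * a)"
  have w: "w \<noteq> 0" "v w < int L"
    using off by (auto simp: val_ge_def w_def)
  have "3 * a * rep C ^ 2 + b = 3 * a * w"
    using a three_neq_0 by (simp add: w_def field_simps)
  then have D: "3 * a * rep C ^ 2 + b \<noteq> 0" "v (3 * a * rep C ^ 2 + b) = v 3 + v a + v w"
    using v_mult three_neq_0 a w(1) by simp_all
  have "airy_int_on (coset k (rep C)) a b = 0"
    using D w(2) L level cubic rep_in_intO[OF C] by (intro airy_int_on_coset_eq_0) auto
  then show ?thesis
    using C residue_rep(2) by simp
qed

text \<open>Only the classes near a stationary point, where \<open>t\<^sup>2 \<equiv> -b/(3a)\<close> modulo \<open>\<pi>\<^sup>L\<close>,
  can contribute.\<close>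
lemma norm_airy_int_on_units_O_le:
  assumes a: "a \<noteq> 0" and k: "1 \<le> k" and L: "L \<le> k"
    and level: "int k + int L + v 3 + v a \<le> 0" and cubic: "3 * (v 3 + v a + int L) \<le> v a"
  shows "norm (airy_int_on units_O a b) \<le> 2 / real q ^ L"
proof -
  let ?S = "{C \<in> residues k. C \<subseteq> units_O}"
  let ?P = "\<lambda>C. val_ge (int L) (rep C ^ 2 - - b / (3 * a))"
  have "norm (airy_int_on units_O a b) \<le> (\<Sum>C\<in>?S. norm (airy_int_on C a b))"
    unfolding airy_int_on_units_O_eq_sum[OF k] by (rule norm_sum)
  also have "\<dots> \<le> (\<Sum>C\<in>?S. if ?P C then 1 / real q ^ k else 0)"
    using airy_int_on_residue_eq_0_off_stationary[OF a _ L level cubic] norm_airy_int_on_residue_le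
    by (intro sum_mono) auto
  also have "\<dots> = real (card {C \<in> residues k. C \<subseteq> units_O \<and> ?P C}) / real q ^ k"
    using finite_residues by (simp add: sum.inter_filter[symmetric] conj_assoc)
  also have "\<dots> \<le> real (2 * q ^ (k - L)) / real q ^ k"
    by (rule divide_right_mono, unfold of_nat_le_iff, rule card_residues_square_cong_le[OF L]) simp
  also have "\<dots> = 2 / real q ^ L"
  proof -
    have "real q ^ k = real q ^ (k - L) * real q ^ L"
      using L by (simp flip: power_add)
    then show ?thesis
      using q_pos by simp
  qed
  finally show ?thesis .
qed

lemma norm_airy_int_on_units_O_le_critical:
  assumes a: "a \<noteq> 0" and crit: "v b = v a + v 3" and large: "8 + 4 * v 3 < - v a - v b"
  shows "norm (airy_int_on units_O a b)
    \<le> 2 * real q powr (2 + real_of_int (v 3) + (real_of_int (v a) + real_of_int (v b)) / 4)"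
proof -
  define k where "k = max ((1 - v b) div 2) ((2 - v a) div 3)"
    \<comment> \<open>\<open>max \<lceil>-v b/2\<rceil> \<lceil>-v a/3\<rceil>\<close>\<close>
  define L where "L = - v b - k"
  have bounds: "- v b \<le> 2 * ((1 - v b) div 2)" "2 * ((1 - v b) div 2) \<le> 1 - v b"
    "- v a \<le> 3 * ((2 - v a) div 3)" "3 * ((2 - v a) div 3) \<le> 2 - v a"
    using div_mult_mod_eq[of "1 - v b" 2] div_mult_mod_eq[of "2 - v a" 3]
      pos_mod_bound[of 2 "1 - v b"] pos_mod_sign[of 2 "1 - v b"]
      pos_mod_bound[of 3 "2 - v a"] pos_mod_sign[of 3 "2 - v a"] by linarith+
  moreover have "k = (1 - v b) div 2 \<or> k = (2 - v a) div 3"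
    unfolding k_def by auto
  ultimately have "k \<le> - v b" "4 * k \<le> 8 + 3 * v 3 - 2 * v b"
    using crit large v_three_nonneg by (elim disjE; linarith)+
  moreover have "- v b \<le> 2 * k" "- v a \<le> 3 * k"
    using bounds unfolding k_def by linarith+
  ultimately have kL: "1 \<le> k" "0 \<le> L" "L \<le> k" "k + L + v 3 + v a \<le> 0"
    "3 * (v 3 + v a + L) \<le> v a" and "- 4 * L \<le> 8 + 4 * v 3 + v a + v b"
    using crit large v_three_nonneg unfolding L_def by (simp_all add: algebra_simps)
  then have exponent:
    "- real_of_int L \<le> 2 + real_of_int (v 3) + (real_of_int (v a) + real_of_int (v b)) / 4"
    by (simp add: field_simps)
  have "norm (airy_int_on units_O a b) \<le> 2 / real q ^ nat L"
    using norm_airy_int_on_units_O_le[OF a, of "nat k" "nat L"] kL by simp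
  also have "\<dots> = 2 * real q powr (- L)"
    using q_pos kL(2) powr_realpow[of "real q" "nat L"] by (simp add: powr_minus divide_inverse)
  also have "\<dots> \<le> 2 * real q powr (2 + real_of_int (v 3) + (real_of_int (v a) + real_of_int (v b)) / 4)"
    using exponent q_pos by (intro mult_left_mono powr_mono) auto
  finally show ?thesis .
qed

lemma norm_airy_int_le_critical:
  assumes a: "a \<noteq> 0" and b: "b \<noteq> 0"
    and crit: "v b = v a + v 3" and large: "8 + 4 * v 3 < - v a - v b"
  shows "norm (airy_int a b) \<le> 2 * real q powr (2 + real_of_int (v 3) + (real_of_int (v a) + real_of_int (v b)) / 4)"
proof -
  have "airy_int (a * uniformizer ^ 3) (b * uniformizer) = 0"
    using v_mult_uniformizer_power[of a 3] v_mult_uniformizer_power[of b 1] a b crit large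
      v_three_nonneg by (intro airy_int_eq_0_if_b_dominant) auto
  then have "airy_int a b = airy_int_on units_O a b"
    using airy_int_recursion[of a b] by simp
  then show ?thesis
    using norm_airy_int_on_units_O_le_critical[OF a crit large] by simp
qed

lemma norm_airy_int_le_if_v_b_small:
  "a \<noteq> 0 \<Longrightarrow> b \<noteq> 0 \<Longrightarrow> 3 * v b < v a \<Longrightarrow>
    norm (airy_int a b) \<le> 2 * real q powr (2 + real_of_int (v 3) + (real_of_int (v a) + real_of_int (v b)) / 4)"
proof (induction "nat (- v a)" arbitrary: a b rule: less_induct)
  case less
  note a = less.prems(1) and b = less.prems(2) and small = less.prems(3)
  consider "- v a - v b \<le> 8 + 4 * v 3"
    | "v b < v a + v 3" "8 + 4 * v 3 < - v a - v b"
    | "v b = v a + v 3" "8 + 4 * v 3 < - v a - v b"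
    | "v a + v 3 < v b" "8 + 4 * v 3 < - v a - v b"
    by linarith
  then show ?case
  proof cases
    case 1
    then have "0 \<le> 2 + real_of_int (v 3) + (real_of_int (v a) + real_of_int (v b)) / 4"
      by (simp add: field_simps)
    then show ?thesis
      using norm_airy_int_le_powr[of _ 2] by simp
  next
    case 2
    then show ?thesis
      using airy_int_eq_0_if_b_dominant[OF a b] small v_three_nonneg by simp
  next
    case 3
    show ?thesis
      using norm_airy_int_le_critical[OF a b 3] .
  next
    case 4
    have a': "a * uniformizer ^ 3 \<noteq> 0" "v (a * uniformizer ^ 3) = v a + 3"
      and b': "b * uniformizer \<noteq> 0" "v (b * uniformizer) = v b + 1"
      using v_mult_uniformizer_power[of a 3] v_mult_uniformizer_power[of b 1] a b by simp_all
    have "airy_int_on units_O a b = 0"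
      using 4 small v_three_nonneg b by (intro airy_int_on_units_O_eq_0_if_a_dominant[OF a]) auto
    moreover have "norm (airy_int (a * uniformizer ^ 3) (b * uniformizer))
        \<le> 2 * real q powr ((2 + real_of_int (v 3) + (real_of_int (v a) + real_of_int (v b)) / 4) + 1)"
      using less.hyps[OF _ a'(1) b'(1)] a'(2) b'(2) 4 small v_three_nonneg
      by (simp add: add_divide_distrib algebra_simps)
    ultimately show ?thesis
      by (rule norm_airy_int_descent)
  qed
qed

lemma Airy_eq: "Airy v \<psi> a b = of_real (real q powr (- real_of_int (v a) / 3)) * airy_int a b"
  by (simp add: Airy_def airy_int_def airy_phase_def[abs_def])

lemma Airy_eq_0_if_v_b_lt_v_a: "b \<noteq> 0 \<Longrightarrow> v b < v a \<Longrightarrow> v a < 0 \<Longrightarrow> Airy v \<psi> a b = 0"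
  using airy_int_eq_0_if_v_b_lt_v_a by (simp add: Airy_eq)

lemma norm_Airy_le_if_v_b_small:
  assumes "a \<noteq> 0" "b \<noteq> 0" "3 * v b < v a"
  shows "norm (Airy v \<psi> a b) \<le> 2 * real q powr (2 + real_of_int (v 3)) *
    real q powr (- real_of_int (v a) / 12 + real_of_int (v b) / 4)"
proof -
  have "norm (Airy v \<psi> a b) \<le> real q powr (- real_of_int (v a) / 3) *
      (2 * real q powr (2 + real_of_int (v 3) + (real_of_int (v a) + real_of_int (v b)) / 4))"
    unfolding Airy_eq norm_mult using norm_airy_int_le_if_v_b_small[OF assms]
    by (simp add: mult_left_mono)
  also have "\<dots> = 2 * real q powr (2 + real_of_int (v 3)) *
      real q powr (- real_of_int (v a) / 12 + real_of_int (v b) / 4)"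
    by (simp add: powr_add[symmetric] field_simps)
  finally show ?thesis .
qed

lemma norm_Airy_le_if_v_b_large:
  assumes "a \<noteq> 0" "b = 0 \<or> v a \<le> 3 * v b"
  shows "norm (Airy v \<psi> a b) \<le> real q powr (1 + real_of_int (v 3))"
proof -
  have "norm (Airy v \<psi> a b) \<le> real q powr (- real_of_int (v a) / 3) *
      real q powr (1 + real_of_int (v 3) + real_of_int (v a) / 3)"
    unfolding Airy_eq norm_mult using norm_airy_int_le_if_v_b_large[OF assms]
    by (simp add: mult_left_mono)
  also have "\<dots> = real q powr (1 + real_of_int (v 3))"
    by (simp add: powr_add[symmetric])
  finally show ?thesis .
qed

end

theorem proposition7p5:
  fixes v :: "'a::field \<Rightarrow> int" and \<psi> :: "'a \<Rightarrow> complex" and a b :: 'a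
  assumes "nonarch_local_field_char0_odd v"
    and "unramified_character v \<psi>"
    and "a \<noteq> 0" and "v a < 0"
  shows "(b \<noteq> 0 \<and> v b < v a \<longrightarrow> Airy v \<psi> a b = 0) \<and>
         (b \<noteq> 0 \<and> v a \<le> v b \<and> real_of_int (v b) < real_of_int (v a) / 3 \<longrightarrow>
            norm (Airy v \<psi> a b) \<le> 2 * real (resq v) powr (2 + real_of_int (v 3)) *
              real (resq v) powr (- real_of_int (v a) / 12 + real_of_int (v b) / 4)) \<and>
         ((b = 0 \<or> real_of_int (v a) / 3 \<le> real_of_int (v b)) \<longrightarrow>
            norm (Airy v \<psi> a b) \<le> real (resq v) powr (1 + real_of_int (v 3)))"
proof -
  interpret unramified_local_field v \<psi>
    using assms(1,2) by (simp add: unramified_local_field_def nonarch_local_field_def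
        unramified_local_field_axioms_def)
  have "real_of_int (v b) < real_of_int (v a) / 3 \<Longrightarrow> 3 * v b < v a"
    and "real_of_int (v a) / 3 \<le> real_of_int (v b) \<Longrightarrow> v a \<le> 3 * v b"
    by linarith+
  then show ?thesis
    using Airy_eq_0_if_v_b_lt_v_a norm_Airy_le_if_v_b_small norm_Airy_le_if_v_b_large assms(3,4)
    by blast
qed

end
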